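(* Let $K$ be a virtual knot and let $P_K$ be its affine index polynomial. Write $P_K=(t-1)\sum_{n\in\mathbb{Z}}a_n t^n$ with integers $a_n$ (only finitely many nonzero). Then \[F_d(K)\ \ge\ \frac{\sum_{n\in\mathbb{Z}}|a_n|}{2}.\]
   Context: Virtual knots are equivalence classes of virtual knot diagrams (or Gauss diagrams) under classical and virtual Reidemeister moves. A Gauss diagram is an oriented circle with signed arrows, one per real crossing, from the over-crossing preimage to the under-crossing preimage, signed by the crossing sign $\varepsilon(\gamma)=\pm1$. A forbidden detour move is the local move on virtual knot diagrams whose effect on Gauss diagrams is to exchange the positions of an arrow head and an arrow tail (of different arrows) that are adjacent on the circle, keeping signs. Every virtual knot diagram can be turned into the trivial (crossingless) diagram by Reidemeister moves, virtual Reidemeister moves and forbidden detour moves; the forbidden detour number $F_d(K)$ is the minimal number of forbidden detour moves needed to transform a diagram of $K$ into the trivial knot diagram (Reidemeister and virtual Reidemeister moves being free). Affine index polynomial: for an arrow $\gamma=\overrightarrow{PQ}$ give its endpoints signs $\varepsilon(P)=-\varepsilon(\gamma)$, $\varepsilon(Q)=\varepsilon(\gamma)$; the index $i(\gamma)$ is the sum of the signs of all arrow endpoints, other than $P,Q$, lying on the arc of the circle from $P$ to $Q$ in the direction of the circle's orientation. Set $J_n(K)=\sum_{i(\gamma)=n}\varepsilon(\gamma)$ for $n\neq0$ and $P_K=\sum_{n\in\mathbb{Z}}J_n(K)(t^{-n}-1)$, a Laurent polynomial invariant of $K$ (equal to Kauffman's affine index polynomial); note $P_K(1)=0$, so it is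 divisible by $t-1$. *)

theory Defs
  imports "HOL-Computational_Algebra.Formal_Laurent_Series" "HOL-Library.Extended_Real"
begin

text \<open>A Gauss diagram is recorded as the cyclic sequence (read in the direction of the
circle's orientation, starting at an arbitrary point) of arrow endpoints.  Each endpoint
carries the label of its arrow, whether it is the head (under-crossing preimage) or the tail
(over-crossing preimage), and the sign of its arrow (True = +1, False = -1).\<close>

datatype endpt = Endpt (lab: nat) (is_head: bool) (positive: bool)

type_synonym gauss = "endpt list"

definition sg :: "bool \<Rightarrow> int" where
  "sg b = (if b then 1 else -1)"

definition wf_gauss :: "gauss \<Rightarrow> bool" where
  "wf_gauss w \<longleftrightarrow> (\<forall>a \<in> lab ` set w. \<exists>s.
      mset (filter (\<lambda>e. lab e = a) w) = {# Endpt a False s, Endpt a True s #})"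

definition arrows :: "gauss \<Rightarrow> nat set" where
  "arrows w = lab ` set w"

text \<open>Changing the base point of the circle (the word is cyclic).\<close>
definition rot_step :: "gauss \<Rightarrow> gauss \<Rightarrow> bool" where
  "rot_step w w' \<longleftrightarrow> (\<exists>u v. w = u @ v \<and> w' = v @ u)"

definition relabel_step :: "gauss \<Rightarrow> gauss \<Rightarrow> bool" where
  "relabel_step w w' \<longleftrightarrow> (\<exists>f. inj f \<and>
      w' = map (\<lambda>e. Endpt (f (lab e)) (is_head e) (positive e)) w)"

text \<open>Reidemeister 1: an isolated arrow (endpoints adjacent), any sign and direction.\<close>
definition r1_step :: "gauss \<Rightarrow> gauss \<Rightarrow> bool" where
  "r1_step w w' \<longleftrightarrow> (\<exists>u v a h s.
      w = u @ [Endpt a h s, Endpt a (\<not> h) s] @ v \<and> w' = u @ v)"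

text \<open>Reidemeister 2: two arrows of opposite signs with adjacent tails and adjacent heads
(heads in either order: parallel or antiparallel strands).\<close>
definition r2_step :: "gauss \<Rightarrow> gauss \<Rightarrow> bool" where
  "r2_step w w' \<longleftrightarrow> (\<exists>u v x a b s hb.
      w = u @ [Endpt a False s, Endpt b False (\<not> s)] @ v @
          (if hb then [Endpt a True s, Endpt b True (\<not> s)]
                 else [Endpt b True (\<not> s), Endpt a True s]) @ x
      \<and> w' = u @ v @ x)"

text \<open>Reidemeister 3.  Arrows a (top over middle), b (top over bottom), c (middle over
bottom) with signs ea, eb, ec.  The top strand segment contains the tails of a, b; the middle
strand segment the head of a and the tail of c; the bottom strand segment the heads of b, c.
The booleans o1, o2, o3 record the order of the two endpoints in each segment.  The realizability condition below is derived from the planar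
model of three oriented lines passing through a triple point.\<close>
definition seg1 :: "bool \<Rightarrow> nat \<Rightarrow> nat \<Rightarrow> bool \<Rightarrow> bool \<Rightarrow> gauss" where
  "seg1 o1 a b ea eb = (if o1 then [Endpt a False ea, Endpt b False eb]
                              else [Endpt b False eb, Endpt a False ea])"
definition seg2 :: "bool \<Rightarrow> nat \<Rightarrow> nat \<Rightarrow> bool \<Rightarrow> bool \<Rightarrow> gauss" where
  "seg2 o2 a c ea ec = (if o2 then [Endpt a True ea, Endpt c False ec]
                              else [Endpt c False ec, Endpt a True ea])"
definition seg3 :: "bool \<Rightarrow> nat \<Rightarrow> nat \<Rightarrow> bool \<Rightarrow> bool \<Rightarrow> gauss" where
  "seg3 o3 b c eb ec = (if o3 then [Endpt b True eb, Endpt c True ec]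
                              else [Endpt c True ec, Endpt b True eb])"

definition r3_ok :: "bool \<Rightarrow> bool \<Rightarrow> bool \<Rightarrow> bool \<Rightarrow> bool \<Rightarrow> bool \<Rightarrow> bool" where
  "r3_ok o1 o2 o3 ea eb ec \<longleftrightarrow>
     sg o1 * sg eb = sg o2 * sg ec \<and> sg o3 * sg ea = sg o1 * sg ec"

definition r3_step :: "gauss \<Rightarrow> gauss \<Rightarrow> bool" where
  "r3_step w w' \<longleftrightarrow> (\<exists>u v x y a b c ea eb ec o1 o2 o3.
      r3_ok o1 o2 o3 ea eb ec \<and>
      (let S1 = seg1 o1 a b ea eb; S2 = seg2 o2 a c ea ec; S3 = seg3 o3 b c eb ec in
        (w = u @ S1 @ v @ S2 @ x @ S3 @ y \<and>
         w' = u @ rev S1 @ v @ rev S2 @ x @ rev S3 @ y) \<or>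
        (w = u @ S1 @ v @ S3 @ x @ S2 @ y \<and>
         w' = u @ rev S1 @ v @ rev S3 @ x @ rev S2 @ y)))"

text \<open>One (classical or virtual) Reidemeister move, or a change of presentation, between
well-formed Gauss diagrams.  Virtual Reidemeister moves do not change the Gauss diagram.\<close>
definition rstep :: "gauss \<Rightarrow> gauss \<Rightarrow> bool" where
  "rstep w w' \<longleftrightarrow> wf_gauss w \<and> wf_gauss w' \<and>
     (rot_step w w' \<or> relabel_step w w' \<or> relabel_step w' w \<or>
      r1_step w w' \<or> r1_step w' w \<or> r2_step w w' \<or> r2_step w' w \<or> r3_step w w')"

text \<open>Forbidden detour move: exchange an adjacent head and tail of different arrows.
(Cyclic adjacency is covered by composing with rotations.)\<close>
definition fd_step :: "gauss \<Rightarrow> gauss \<Rightarrow> bool" where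
  "fd_step w w' \<longleftrightarrow> (\<exists>u v x y. w = u @ [x, y] @ v \<and> w' = u @ [y, x] @ v \<and>
      lab x \<noteq> lab y \<and> is_head x \<noteq> is_head y)"

inductive unknots_with :: "gauss \<Rightarrow> nat \<Rightarrow> bool" where
  zero: "rstep\<^sup>*\<^sup>* w [] \<Longrightarrow> unknots_with w 0"
| step: "rstep\<^sup>*\<^sup>* w u \<Longrightarrow> fd_step u v \<Longrightarrow> unknots_with v n \<Longrightarrow> unknots_with w (Suc n)"

text \<open>Forbidden detour number (of the virtual knot represented by w); infinity if no
unknotting sequence existed.\<close>
definition Fd :: "gauss \<Rightarrow> enat" where
  "Fd w = Inf {enat n | n. unknots_with w n}"

definition endpt_sign :: "endpt \<Rightarrow> int" where
  "endpt_sign e = (if is_head e then sg (positive e) else - sg (positive e))"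

text \<open>The endpoints strictly between the tail P and head Q of arrow a, going from P to Q
along the orientation of the circle.\<close>
definition arc :: "gauss \<Rightarrow> nat \<Rightarrow> gauss" where
  "arc w a = takeWhile (\<lambda>e. \<not> (lab e = a \<and> is_head e))
               (tl (dropWhile (\<lambda>e. \<not> (lab e = a \<and> \<not> is_head e)) (w @ w)))"

definition idx :: "gauss \<Rightarrow> nat \<Rightarrow> int" where
  "idx w a = sum_list (map endpt_sign (arc w a))"

definition arrow_sign :: "gauss \<Rightarrow> nat \<Rightarrow> int" where
  "arrow_sign w a = sg (positive (hd (filter (\<lambda>e. lab e = a) w)))"

definition J :: "gauss \<Rightarrow> int \<Rightarrow> int" where
  "J w n = (\<Sum>a \<in> {a \<in> arrows w. idx w a = n}. arrow_sign w a)"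

definition aff_index_poly :: "gauss \<Rightarrow> int fls" where
  "aff_index_poly w = (\<Sum>n \<in> idx w ` arrows w - {0}.
      fls_const (J w n) * (fls_X_intpow (- n) - 1))"

end

theory Submission
  imports Defs
begin

text \<open>Let the height of an endpoint be the sum of the signs of the endpoints before it on the
circle cut open at some base point.  The index of an arrow is then the height of its head minus
the height of its tail plus its sign; since all signs sum to zero, this does not depend on the
base point.  Reidemeister moves either preserve these height differences or remove arrows whose
contributions to the affine index polynomial cancel, so the polynomial is an invariant.  A
forbidden detour exchanges an adjacent head and tail, which changes the indices of exactly these
two arrows by \<open>\<plusminus>1\<close>; as \<open>t\<^sup>-\<^sup>i\<^sup>\<plusminus>\<^sup>1 - t\<^sup>-\<^sup>i\<close> is \<open>t - 1\<close> times a monomial, the polynomial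
changes by \<open>t - 1\<close> times a sum of two monomials with coefficients \<open>\<plusminus>1\<close>.  Hence the
\<open>\<ell>\<^sub>1\<close> norm of \<open>P\<^sub>K / (t - 1)\<close> drops by at most 2 per forbidden detour, and it is 0 for the
trivial diagram.\<close>

section \<open>Sign sums and heights\<close>

definition sign_sum :: "gauss \<Rightarrow> int" where
  "sign_sum w = sum_list (map endpt_sign w)"

lemma sign_sum_simps [simp]:
  "sign_sum [] = 0" "sign_sum (e # w) = endpt_sign e + sign_sum w"
  "sign_sum (u @ v) = sign_sum u + sign_sum v"
  by (simp_all add: sign_sum_def)

definition height :: "gauss \<Rightarrow> endpt \<Rightarrow> int" where
  "height w e = sign_sum (takeWhile (\<lambda>x. x \<noteq> e) w)"

lemma height_Cons [simp]: "height (x # w) e = (if x = e then 0 else endpt_sign x + height w e)"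
  by (simp add: height_def)

lemma height_append:
  "height (u @ v) e = (if e \<in> set u then height u e else sign_sum u + height v e)"
  by (induction u) (auto simp: height_def)

lemma height_rotate:
  assumes "distinct (u @ v)" "sign_sum (u @ v) = 0" "e \<in> set (u @ v)"
  shows "height (v @ u) e = height (u @ v) e + sign_sum v"
  using assms by (auto simp: height_append)

lemma height_remove: "e \<notin> set m \<Longrightarrow> sign_sum m = 0 \<Longrightarrow> height (u @ m @ v) e = height (u @ v) e"
  by (simp add: height_append)

lemma height_swap:
  assumes "distinct (p @ [X, Y] @ q)"
  shows "height (p @ [Y, X] @ q) e = height (p @ [X, Y] @ q) e +
           (if e = X then endpt_sign Y else if e = Y then - endpt_sign X else 0)"
  using assms by (auto simp: height_append)

lemma wf_gauss_mset_cong: "mset w = mset w' \<Longrightarrow> wf_gauss w = wf_gauss w'"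
  unfolding wf_gauss_def by (metis mset_filter set_mset_mset)

lemma fd_step_wf_gauss:
  assumes "fd_step u v" "wf_gauss u"
  shows "wf_gauss v"
proof -
  have "mset v = mset u" using assms(1) by (auto simp: fd_step_def)
  thus ?thesis using wf_gauss_mset_cong assms(2) by blast
qed

lemma wf_gauss_arrow_endpts:
  assumes "wf_gauss w" "e \<in> set w"
  shows "mset (filter (\<lambda>x. lab x = lab e) w) =
           {#Endpt (lab e) False (positive e), Endpt (lab e) True (positive e)#}"
proof -
  obtain s where
    s: "mset (filter (\<lambda>x. lab x = lab e) w) = {#Endpt (lab e) False s, Endpt (lab e) True s#}"
    using assms unfolding wf_gauss_def by auto
  have "e \<in># mset (filter (\<lambda>x. lab x = lab e) w)" using assms by simp
  hence "positive e = s" unfolding s by (cases e) auto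
  thus ?thesis using s by simp
qed

lemma wf_gauss_other_end:
  assumes "wf_gauss w" "e \<in> set w"
  shows "Endpt (lab e) h (positive e) \<in> set w"
proof -
  have "Endpt (lab e) h (positive e) \<in># mset (filter (\<lambda>x. lab x = lab e) w)"
    unfolding wf_gauss_arrow_endpts[OF assms] by (cases h) auto
  thus ?thesis by simp
qed

lemma wf_gauss_endpt_unique:
  assumes "wf_gauss w" "e \<in> set w" "e' \<in> set w" "lab e = lab e'" "is_head e = is_head e'"
  shows "e = e'"
proof -
  have "e' \<in># mset (filter (\<lambda>x. lab x = lab e) w)" using assms by simp
  thus ?thesis
    using assms(5) unfolding wf_gauss_arrow_endpts[OF assms(1,2)] by (cases e; cases e') auto
qed

lemma wf_gauss_lab_neq:
  assumes "wf_gauss w" "e \<in> set w" "e' \<in> set w" "e \<noteq> e'" "is_head e = is_head e'"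
  shows "lab e \<noteq> lab e'"
  using wf_gauss_endpt_unique assms by blast

lemma wf_gauss_distinct:
  assumes "wf_gauss w"
  shows "distinct w"
proof -
  have "count (mset w) e \<le> 1" for e
  proof -
    have "count (mset w) e = count (mset (filter (\<lambda>x. lab x = lab e) w)) e"
      by (simp add: mset_filter)
    also have "\<dots> \<le> 1"
    proof (cases "e \<in> set w")
      case True
      show ?thesis unfolding wf_gauss_arrow_endpts[OF assms True] by (cases e) auto
    qed (simp flip: count_mset_0_iff)
    finally show ?thesis .
  qed
  thus ?thesis by (simp add: distinct_count_atmost_1 le_Suc_eq)
qed

lemma sign_sum_wf_gauss:
  assumes "wf_gauss w"
  shows "sign_sum w = 0"
proof -
  have "sign_sum w = (\<Sum>e\<in>set w. endpt_sign e)"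
    using wf_gauss_distinct[OF assms] by (simp add: sign_sum_def sum_list_distinct_conv_sum_set)
  also have "\<dots> = (\<Sum>a\<in>lab ` set w. \<Sum>e\<in>{e \<in> set w. lab e = a}. endpt_sign e)"
    by (rule sum.image_gen) simp
  also have "\<dots> = 0"
  proof (rule sum.neutral, rule ballI)
    fix a assume "a \<in> lab ` set w"
    then obtain e where e: "e \<in> set w" "a = lab e" by auto
    have "{x \<in> set w. lab x = a} = set (filter (\<lambda>x. lab x = lab e) w)" using e by auto
    also have "\<dots> = {Endpt a False (positive e), Endpt a True (positive e)}"
      using arg_cong[OF wf_gauss_arrow_endpts[OF assms e(1)], of set_mset] e by simp
    finally show "(\<Sum>x\<in>{x \<in> set w. lab x = a}. endpt_sign x) = 0"
      by (simp add: endpt_sign_def)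
  qed
  finally show ?thesis .
qed

lemma arrow_sign_wf_gauss:
  assumes "wf_gauss w" "e \<in> set w"
  shows "arrow_sign w (lab e) = sg (positive e)"
proof -
  let ?f = "filter (\<lambda>x. lab x = lab e) w"
  have "hd ?f \<in> set ?f" using assms(2) by (intro hd_in_set) (auto simp: filter_empty_conv)
  also have "set ?f = {Endpt (lab e) False (positive e), Endpt (lab e) True (positive e)}"
    using arg_cong[OF wf_gauss_arrow_endpts[OF assms], of set_mset] by simp
  finally have "hd ?f \<in> {Endpt (lab e) False (positive e), Endpt (lab e) True (positive e)}" .
  thus ?thesis unfolding arrow_sign_def by auto
qed

lemma arrow_sign_subset:
  assumes "wf_gauss w" "wf_gauss w'" "set w' \<subseteq> set w" "a \<in> arrows w'"
  shows "arrow_sign w' a = arrow_sign w a"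
proof -
  obtain e where "e \<in> set w'" "a = lab e" using assms(4) by (auto simp: arrows_def)
  thus ?thesis using arrow_sign_wf_gauss assms(1-3) by auto
qed

section \<open>The index as a difference of heights\<close>

lemma arc_from_tail:
  assumes wf: "wf_gauss (u @ Endpt a False s # r)"
  shows "arc (u @ Endpt a False s # r) a = takeWhile (\<lambda>x. x \<noteq> Endpt a True s) (r @ u)"
proof -
  let ?w = "u @ Endpt a False s # r"
  have d: "distinct ?w" using wf_gauss_distinct[OF wf] .
  have tail: "e = Endpt a False s" if "e \<in> set ?w" "lab e = a" "\<not> is_head e" for e
    using wf_gauss_endpt_unique[OF wf that(1), of "Endpt a False s"] that by simp
  have head: "e = Endpt a True s" if "e \<in> set ?w" "lab e = a" "is_head e" for e
    using wf_gauss_endpt_unique[OF wf that(1) wf_gauss_other_end[OF wf, of "Endpt a False s" True]]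
      that by simp
  have "Endpt a True s \<in> set (r @ u)"
    using wf_gauss_other_end[OF wf, of "Endpt a False s" True] by auto
  then obtain p q where pq: "r @ u = p @ Endpt a True s # q" by (meson split_list)
  have "dropWhile (\<lambda>e. \<not> (lab e = a \<and> \<not> is_head e)) (?w @ ?w) =
      Endpt a False s # (r @ u) @ Endpt a False s # r"
  proof -
    have "\<not> (lab e = a \<and> \<not> is_head e)" if "e \<in> set u" for e
      using tail[of e] d that by auto
    thus ?thesis by (subst append_assoc, subst dropWhile_append2) auto
  qed
  moreover have Hp: "Endpt a True s \<notin> set p"
  proof -
    have "distinct (r @ u)" using d by auto
    thus "Endpt a True s \<notin> set p" unfolding pq by auto
  qed
  moreover have "takeWhile (\<lambda>e. \<not> (lab e = a \<and> is_head e)) ((r @ u) @ Endpt a False s # r) = p"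
  proof -
    have "set p \<subseteq> set (r @ u)" unfolding pq by auto
    hence "\<not> (lab e = a \<and> is_head e)" if "e \<in> set p" for e
      using head[of e] Hp that by auto
    thus ?thesis unfolding pq by (subst append_assoc, subst takeWhile_append2) auto
  qed
  moreover have "takeWhile (\<lambda>x. x \<noteq> Endpt a True s) (r @ u) = p"
    using Hp unfolding pq by (subst takeWhile_append2) auto
  ultimately show ?thesis unfolding arc_def by simp
qed

lemma idx_eq_height:
  assumes wf: "wf_gauss w" and tail: "Endpt a False s \<in> set w"
  shows "idx w a = height w (Endpt a True s) - height w (Endpt a False s) + sg s"
proof -
  obtain u r where w: "w = u @ Endpt a False s # r" using tail by (meson split_list)
  let ?T = "Endpt a False s" and ?H = "Endpt a True s"
  have H: "?H \<in> set w" using wf_gauss_other_end[OF wf tail, of True] by simp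
  have rot: "height (?T # r @ u) e = height w e + sign_sum (?T # r)" if "e \<in> set w" for e
    using height_rotate[of u "?T # r" e] wf_gauss_distinct[OF wf] sign_sum_wf_gauss[OF wf] that w
    by simp
  have "idx w a = height (r @ u) ?H"
    using arc_from_tail[OF wf[unfolded w]] by (simp add: w idx_def height_def sign_sum_def)
  also have "\<dots> = height (?T # r @ u) ?H - height (?T # r @ u) ?T + sg s"
    by (simp add: endpt_sign_def)
  also have "\<dots> = height w ?H - height w ?T + sg s"
    using rot[OF H] rot[OF tail] by simp
  finally show ?thesis .
qed

lemma idx_eq_if_height_shift:
  assumes wf: "wf_gauss w" "wf_gauss w'" and "set w' \<subseteq> set w" "a \<in> arrows w'"
    and shift: "\<And>e. e \<in> set w' \<Longrightarrow> lab e = a \<Longrightarrow> height w' e = height w e + c"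
  shows "idx w' a = idx w a"
proof -
  obtain e where e: "e \<in> set w'" "a = lab e" using assms(4) by (auto simp: arrows_def)
  let ?T = "Endpt a False (positive e)" and ?H = "Endpt a True (positive e)"
  have "?T \<in> set w'" "?H \<in> set w'" using wf_gauss_other_end[OF wf(2) e(1)] e(2) by auto
  thus ?thesis using idx_eq_height[OF wf(1)] idx_eq_height[OF wf(2)] shift assms(3) by auto
qed

text \<open>Exchanging adjacent endpoints \<open>X, Y\<close> raises the height of \<open>X\<close> by the sign of \<open>Y\<close> and
lowers the height of \<open>Y\<close> by the sign of \<open>X\<close>; this is the resulting change of the index of \<open>c\<close>.\<close>

definition idx_swap_shift :: "endpt \<Rightarrow> endpt \<Rightarrow> nat \<Rightarrow> int" where
  "idx_swap_shift X Y c =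
     (if c = lab X then sg (is_head X) * endpt_sign Y else 0) -
     (if c = lab Y then sg (is_head Y) * endpt_sign X else 0)"

lemma wf_gauss_head_minus_tail:
  assumes wf: "wf_gauss w" and "Z \<in> set w" "Endpt c False s \<in> set w"
  shows "of_bool (Z = Endpt c True s) - of_bool (Z = Endpt c False s) =
           (if lab Z = c then sg (is_head Z) else (0 :: int))"
proof (cases "lab Z = c")
  case True
  have "Endpt c h s \<in> set w" for h using wf_gauss_other_end[OF wf assms(3)] by simp
  hence "Z = Endpt c (is_head Z) s" using wf_gauss_endpt_unique[OF wf assms(2)] True by simp
  thus ?thesis using True by (cases "is_head Z") (auto simp: sg_def)
qed auto

lemma idx_swap:
  assumes wf: "wf_gauss (p @ [X, Y] @ q)" and XY: "lab X \<noteq> lab Y"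
    and c: "c \<in> arrows (p @ [X, Y] @ q)"
  shows "idx (p @ [Y, X] @ q) c = idx (p @ [X, Y] @ q) c + idx_swap_shift X Y c"
proof -
  let ?w = "p @ [X, Y] @ q" and ?w' = "p @ [Y, X] @ q"
  let ?H = "Endpt c True" and ?T = "Endpt c False"
  have wf': "wf_gauss ?w'" using wf_gauss_mset_cong[of ?w ?w'] wf by simp
  obtain e where "e \<in> set ?w" "c = lab e" using c by (auto simp: arrows_def)
  then obtain s where T: "?T s \<in> set ?w" using wf_gauss_other_end[OF wf] by blast
  hence T': "?T s \<in> set ?w'" by auto
  have "X \<noteq> Y" using XY by blast
  have "idx ?w' c - idx ?w c =
      endpt_sign Y * (of_bool (X = ?H s) - of_bool (X = ?T s)) -
      endpt_sign X * (of_bool (Y = ?H s) - of_bool (Y = ?T s))"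
    using idx_eq_height[OF wf T] idx_eq_height[OF wf' T'] height_swap[OF wf_gauss_distinct[OF wf]]
      \<open>X \<noteq> Y\<close> by (auto simp: algebra_simps)
  also have "\<dots> = idx_swap_shift X Y c"
    using wf_gauss_head_minus_tail[OF wf _ T, of X] wf_gauss_head_minus_tail[OF wf _ T, of Y]
    by (auto simp: idx_swap_shift_def)
  finally show ?thesis by simp
qed

lemma idx_swap3:
  assumes wf: "wf_gauss (u @ [X1, Y1] @ v @ [X2, Y2] @ x @ [X3, Y3] @ y)"
    and "lab X1 \<noteq> lab Y1" "lab X2 \<noteq> lab Y2" "lab X3 \<noteq> lab Y3"
    and z: "z \<in> arrows (u @ [X1, Y1] @ v @ [X2, Y2] @ x @ [X3, Y3] @ y)"
  shows "idx (u @ [Y1, X1] @ v @ [Y2, X2] @ x @ [Y3, X3] @ y) z =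
           idx (u @ [X1, Y1] @ v @ [X2, Y2] @ x @ [X3, Y3] @ y) z +
           idx_swap_shift X1 Y1 z + idx_swap_shift X2 Y2 z + idx_swap_shift X3 Y3 z"
proof -
  have wf_perm: "wf_gauss w'" and z_perm: "z \<in> arrows w'"
    if "mset w' = mset (u @ [X1, Y1] @ v @ [X2, Y2] @ x @ [X3, Y3] @ y)" for w'
    using wf_gauss_mset_cong[OF that] wf z mset_eq_setD[OF that] by (simp_all add: arrows_def)
  have "idx (u @ [Y1, X1] @ v @ [X2, Y2] @ x @ [X3, Y3] @ y) z =
          idx (u @ [X1, Y1] @ v @ [X2, Y2] @ x @ [X3, Y3] @ y) z + idx_swap_shift X1 Y1 z"
    by (rule idx_swap) (use assms in simp_all)
  moreover have "idx ((u @ [Y1, X1] @ v) @ [Y2, X2] @ x @ [X3, Y3] @ y) z =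
          idx ((u @ [Y1, X1] @ v) @ [X2, Y2] @ x @ [X3, Y3] @ y) z + idx_swap_shift X2 Y2 z"
    by (rule idx_swap) (use assms wf_perm z_perm in simp_all)
  moreover have "idx ((u @ [Y1, X1] @ v @ [Y2, X2] @ x) @ [Y3, X3] @ y) z =
          idx ((u @ [Y1, X1] @ v @ [Y2, X2] @ x) @ [X3, Y3] @ y) z + idx_swap_shift X3 Y3 z"
    by (rule idx_swap) (use assms wf_perm z_perm in simp_all)
  ultimately show ?thesis by simp
qed

section \<open>Invariance of the affine index polynomial\<close>

lemma fls_const_sum: "fls_const (\<Sum>x\<in>A. f x) = (\<Sum>x\<in>A. fls_const (f x))"
  by (rule fls_eqI) (simp add: fls_nth_sum)

definition arrow_term :: "gauss \<Rightarrow> nat \<Rightarrow> int fls" where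
  "arrow_term w a = fls_const (arrow_sign w a) * (fls_X_intpow (- idx w a) - 1)"

lemma finite_arrows [simp]: "finite (arrows w)"
  by (simp add: arrows_def)

lemma aff_index_poly_eq_sum: "aff_index_poly w = (\<Sum>a\<in>arrows w. arrow_term w a)"
proof -
  let ?t = "\<lambda>n. fls_X_intpow (- n) - (1 :: int fls)"
  have "aff_index_poly w = (\<Sum>n\<in>idx w ` arrows w. fls_const (J w n) * ?t n)"
    unfolding aff_index_poly_def by (intro sum.mono_neutral_left) auto
  also have "\<dots> = (\<Sum>n\<in>idx w ` arrows w. \<Sum>a\<in>{a \<in> arrows w. idx w a = n}. arrow_term w a)"
    unfolding J_def fls_const_sum sum_distrib_right arrow_term_def by (intro sum.cong) auto
  also have "\<dots> = (\<Sum>a\<in>arrows w. arrow_term w a)"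
    by (rule sum.image_gen[symmetric]) simp
  finally show ?thesis .
qed

lemma aff_index_poly_Nil: "aff_index_poly [] = 0"
  by (simp add: aff_index_poly_def arrows_def)

lemma aff_index_poly_eqI:
  assumes wf: "wf_gauss w" "wf_gauss w'" and sub: "set w' \<subseteq> set w"
    and idx: "\<And>a. a \<in> arrows w' \<Longrightarrow> idx w' a = idx w a"
    and removed: "(\<Sum>a\<in>arrows w - arrows w'. arrow_term w a) = 0"
  shows "aff_index_poly w' = aff_index_poly w"
proof -
  have "arrows w' \<subseteq> arrows w" using sub by (auto simp: arrows_def)
  hence "aff_index_poly w =
      (\<Sum>a\<in>arrows w'. arrow_term w a) + (\<Sum>a\<in>arrows w - arrows w'. arrow_term w a)"
    unfolding aff_index_poly_eq_sum by (simp add: sum.subset_diff)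
  also have "\<dots> = (\<Sum>a\<in>arrows w'. arrow_term w' a)"
    using removed idx arrow_sign_subset[OF wf sub] by (simp add: arrow_term_def)
  finally show ?thesis by (simp add: aff_index_poly_eq_sum)
qed

lemma aff_index_poly_rot:
  assumes wf: "wf_gauss w" "wf_gauss w'" and "rot_step w w'"
  shows "aff_index_poly w' = aff_index_poly w"
proof -
  obtain u v where w: "w = u @ v" and w': "w' = v @ u" using assms(3) by (auto simp: rot_step_def)
  have "height w' e = height w e + sign_sum v" if "e \<in> set w'" for e
    using height_rotate wf_gauss_distinct[OF wf(1)] sign_sum_wf_gauss[OF wf(1)] that
    unfolding w w' by auto
  moreover have "set w' = set w" "arrows w' = arrows w" by (auto simp: w w' arrows_def)
  ultimately show ?thesis using wf by (intro aff_index_poly_eqI idx_eq_if_height_shift) auto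
qed

lemma aff_index_poly_relabel:
  assumes "relabel_step w w'"
  shows "aff_index_poly w' = aff_index_poly w"
proof -
  obtain f where f: "inj f" and w': "w' = map (\<lambda>e. Endpt (f (lab e)) (is_head e) (positive e)) w"
    using assms by (auto simp: relabel_step_def)
  define g where "g e = Endpt (f (lab e)) (is_head e) (positive e)" for e
  have w': "w' = map g w" using w' by (simp add: g_def)
  have pred: "P (lab (g e) = f a) (is_head (g e)) = P (lab e = a) (is_head e)" for P e a
    by (simp add: g_def inj_eq[OF f])
  have "arrow_term w' (f a) = arrow_term w a" for a
  proof -
    have "arrow_sign w' (f a) = arrow_sign w a"
      unfolding arrow_sign_def w' filter_map comp_def pred[of "\<lambda>l h. l"]
      by (cases "filter (\<lambda>e. lab e = a) w") (auto simp: g_def)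
    moreover have "arc w' (f a) = map g (arc w a)"
      unfolding arc_def w' map_append[symmetric] dropWhile_map map_tl[symmetric] takeWhile_map
        comp_def pred[of "\<lambda>l h. \<not> (l \<and> \<not> h)"] pred[of "\<lambda>l h. \<not> (l \<and> h)"] ..
    moreover have "endpt_sign (g e) = endpt_sign e" for e by (simp add: g_def endpt_sign_def)
    ultimately show ?thesis by (simp add: arrow_term_def idx_def comp_def)
  qed
  moreover have "arrows w' = f ` arrows w"
    by (force simp: arrows_def w' g_def)
  ultimately show ?thesis
    unfolding aff_index_poly_eq_sum using f by (simp add: sum.reindex inj_on_subset)
qed

lemma aff_index_poly_r1:
  assumes wf: "wf_gauss w" "wf_gauss w'" and "r1_step w w'"
  shows "aff_index_poly w' = aff_index_poly w"
proof -
  obtain u v a h s where w: "w = u @ [Endpt a h s, Endpt a (\<not> h) s] @ v" and w': "w' = u @ v"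
    using assms(3) by (auto simp: r1_step_def)
  let ?m = "[Endpt a h s, Endpt a (\<not> h) s]"
  have d: "distinct w" using wf_gauss_distinct[OF wf(1)] .
  have "e \<in> set ?m" if "e \<in> set w" "lab e = a" for e
    using wf_gauss_endpt_unique[OF wf(1) that(1), of "Endpt a (is_head e) s"] that
    by (cases "is_head e = h") (auto simp: w)
  hence "a \<notin> arrows w'" using d by (force simp: arrows_def w w')
  hence removed: "arrows w - arrows w' = {a}" by (auto simp: arrows_def w w')
  have "Endpt a False s \<in> set w" by (cases h) (auto simp: w)
  from idx_eq_height[OF wf(1) this] have "idx w a = 0"
    using d by (cases h) (auto simp: w height_append endpt_sign_def)
  hence "arrow_term w a = 0" by (simp add: arrow_term_def)
  moreover have "height w' e = height w e + 0" if "e \<in> set w'" for e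
  proof -
    have "e \<notin> set ?m" using d that by (auto simp: w w')
    moreover have "sign_sum ?m = 0" by (cases h) (simp_all add: endpt_sign_def)
    ultimately show ?thesis using height_remove[of e ?m u v] by (simp add: w w')
  qed
  ultimately show ?thesis
    using wf removed by (intro aff_index_poly_eqI idx_eq_if_height_shift) (auto simp: w w')
qed

lemma r2_arrow_terms_cancel:
  assumes wf: "wf_gauss w" and w: "w = u @ [Endpt a False s, Endpt b False (\<not> s)] @ v @ heads @ x"
    and heads: "heads = (if hb then [Endpt a True s, Endpt b True (\<not> s)]
                         else [Endpt b True (\<not> s), Endpt a True s])"
  shows "a \<noteq> b" "arrow_term w a + arrow_term w b = 0"
proof -
  have d: "distinct w" using wf_gauss_distinct[OF wf] .
  have tails: "Endpt a False s \<in> set w" "Endpt b False (\<not> s) \<in> set w" by (simp_all add: w)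
  show "a \<noteq> b" using wf_gauss_endpt_unique[OF wf tails] by auto
  have "idx w a = idx w b"
    using d \<open>a \<noteq> b\<close> unfolding idx_eq_height[OF wf tails(1)] idx_eq_height[OF wf tails(2)]
    by (cases hb) (auto simp: w heads height_append endpt_sign_def sg_def)
  moreover have "arrow_sign w b = - arrow_sign w a"
    using arrow_sign_wf_gauss[OF wf tails(1)] arrow_sign_wf_gauss[OF wf tails(2)]
    by (simp add: sg_def)
  ultimately show "arrow_term w a + arrow_term w b = 0"
    by (simp add: arrow_term_def)
qed

lemma aff_index_poly_r2:
  assumes wf: "wf_gauss w" "wf_gauss w'" and "r2_step w w'"
  shows "aff_index_poly w' = aff_index_poly w"
proof -
  obtain u v x a b s hb where w: "w = u @ [Endpt a False s, Endpt b False (\<not> s)] @ v @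
          (if hb then [Endpt a True s, Endpt b True (\<not> s)]
                 else [Endpt b True (\<not> s), Endpt a True s]) @ x" and w': "w' = u @ v @ x"
    using assms(3) by (auto simp: r2_step_def)
  define tails where "tails = [Endpt a False s, Endpt b False (\<not> s)]"
  define heads where "heads = (if hb then [Endpt a True s, Endpt b True (\<not> s)]
                 else [Endpt b True (\<not> s), Endpt a True s])"
  note cancel = r2_arrow_terms_cancel[OF wf(1) w[folded heads_def] heads_def]
  have w: "w = u @ tails @ v @ heads @ x" using w by (simp add: tails_def heads_def)
  have d: "distinct w" using wf_gauss_distinct[OF wf(1)] .
  have "Endpt a h s \<in> set w" "Endpt b h (\<not> s) \<in> set w" for h
    by (cases h; cases hb; simp add: w tails_def heads_def)+
  hence ends: "e \<in> set tails \<union> set heads" if "e \<in> set w" "lab e = a \<or> lab e = b" for e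
    using that wf_gauss_endpt_unique[OF wf(1) that(1)]
    by (cases "is_head e") (auto simp: tails_def heads_def)
  have "lab e \<noteq> a \<and> lab e \<noteq> b" if "e \<in> set w'" for e
  proof -
    have "e \<notin> set tails \<union> set heads" "e \<in> set w" using d that by (auto simp: w w')
    thus ?thesis using ends by blast
  qed
  hence "arrows w - arrows w' = {a, b}"
    by (auto simp: arrows_def w w' tails_def heads_def)
  moreover have "height w' e = height w e + 0" if "e \<in> set w'" for e
  proof -
    have "e \<notin> set tails" "e \<notin> set heads" using d that by (auto simp: w w')
    moreover have "sign_sum tails = 0" "sign_sum heads = 0"
      by (simp_all add: tails_def heads_def endpt_sign_def sg_def)
    ultimately show ?thesis
      using height_remove[of e tails u "v @ heads @ x"] height_remove[of e heads "u @ v" x]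
      by (simp add: w w')
  qed
  ultimately show ?thesis
    using wf cancel by (intro aff_index_poly_eqI idx_eq_if_height_shift) (auto simp: w w')
qed

text \<open>An R3 move reverses three segments of two endpoints each; the realizability condition
\<^const>\<open>r3_ok\<close> is exactly what makes the three resulting index changes cancel.\<close>

lemma r3_idx_shifts_cancel:
  assumes ok: "r3_ok o1 o2 o3 ea eb ec" and "a \<noteq> b" "a \<noteq> c" "b \<noteq> c"
    and "seg1 o1 a b ea eb = [X1, Y1]" "seg2 o2 a c ea ec = [X2, Y2]" "seg3 o3 b c eb ec = [X3, Y3]"
  shows "idx_swap_shift X1 Y1 z + idx_swap_shift X2 Y2 z + idx_swap_shift X3 Y3 z = 0"
proof -
  have shift1:
    "idx_swap_shift X1 Y1 z = sg o1 * idx_swap_shift (Endpt a False ea) (Endpt b False eb) z"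
    using assms(5) by (cases o1) (auto simp: seg1_def sg_def idx_swap_shift_def)
  have shift2:
    "idx_swap_shift X2 Y2 z = sg o2 * idx_swap_shift (Endpt a True ea) (Endpt c False ec) z"
    using assms(6) by (cases o2) (auto simp: seg2_def sg_def idx_swap_shift_def)
  have shift3:
    "idx_swap_shift X3 Y3 z = sg o3 * idx_swap_shift (Endpt b True eb) (Endpt c True ec) z"
    using assms(7) by (cases o3) (auto simp: seg3_def sg_def idx_swap_shift_def)
  have "sg o1 * sg eb = sg o2 * sg ec" "sg o1 * sg ea = sg o3 * sg ec"
    "sg o2 * sg ea = sg o3 * sg eb"
    using ok unfolding r3_ok_def
    by (cases o1; cases o2; cases o3; cases ea; cases eb; cases ec; simp add: sg_def)+
  moreover have "sg True = 1" "sg False = -1" by (simp_all add: sg_def)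
  ultimately show ?thesis
    unfolding shift1 shift2 shift3 using assms(2-4)
    by (cases "z = a"; cases "z = b"; cases "z = c")
      (simp_all add: idx_swap_shift_def endpt_sign_def)
qed

lemma r3_arrows_distinct:
  assumes wf: "wf_gauss w" and "distinct (seg1 o1 a b ea eb @ seg2 o2 a c ea ec)"
    and "set (seg1 o1 a b ea eb @ seg2 o2 a c ea ec) \<subseteq> set w"
  shows "a \<noteq> b" "a \<noteq> c" "b \<noteq> c"
proof -
  have tails: "Endpt a False ea \<in> set (seg1 o1 a b ea eb)"
    "Endpt b False eb \<in> set (seg1 o1 a b ea eb)"
    "Endpt c False ec \<in> set (seg2 o2 a c ea ec)"
    by (simp_all add: seg1_def seg2_def)
  have "Endpt a False ea \<noteq> Endpt b False eb" using assms(2) by (cases o1) (auto simp: seg1_def)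
  moreover have "Endpt a False ea \<noteq> Endpt c False ec" "Endpt b False eb \<noteq> Endpt c False ec"
    using assms(2) tails by auto
  moreover have "Endpt a False ea \<in> set w" "Endpt b False eb \<in> set w" "Endpt c False ec \<in> set w"
    using assms(3) tails by auto
  ultimately show "a \<noteq> b" "a \<noteq> c" "b \<noteq> c"
    using wf_gauss_lab_neq[OF wf] by (metis endpt.sel(1,2))+
qed

lemma aff_index_poly_r3:
  assumes wf: "wf_gauss w" "wf_gauss w'" and "r3_step w w'"
  shows "aff_index_poly w' = aff_index_poly w"
proof -
  obtain u v x y a b c ea eb ec o1 o2 o3 where ok: "r3_ok o1 o2 o3 ea eb ec" and moves:
    "(w = u @ seg1 o1 a b ea eb @ v @ seg2 o2 a c ea ec @ x @ seg3 o3 b c eb ec @ y \<and>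
      w' = u @ rev (seg1 o1 a b ea eb) @ v @ rev (seg2 o2 a c ea ec) @ x @
             rev (seg3 o3 b c eb ec) @ y) \<or>
     (w = u @ seg1 o1 a b ea eb @ v @ seg3 o3 b c eb ec @ x @ seg2 o2 a c ea ec @ y \<and>
      w' = u @ rev (seg1 o1 a b ea eb) @ v @ rev (seg3 o3 b c eb ec) @ x @
             rev (seg2 o2 a c ea ec) @ y)"
    using assms(3) unfolding r3_step_def Let_def by blast
  have "\<exists>X1 Y1 X2 Y2 X3 Y3. seg1 o1 a b ea eb = [X1, Y1] \<and>
      seg2 o2 a c ea ec = [X2, Y2] \<and> seg3 o3 b c eb ec = [X3, Y3]"
    by (simp add: seg1_def seg2_def seg3_def)
  then obtain X1 Y1 X2 Y2 X3 Y3 where S1: "seg1 o1 a b ea eb = [X1, Y1]"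
    and S2: "seg2 o2 a c ea ec = [X2, Y2]" and S3: "seg3 o3 b c eb ec = [X3, Y3]"
    by blast
  have "distinct (seg1 o1 a b ea eb @ seg2 o2 a c ea ec)"
    "set (seg1 o1 a b ea eb @ seg2 o2 a c ea ec) \<subseteq> set w"
    using moves wf_gauss_distinct[OF wf(1)] by auto
  note abc = r3_arrows_distinct[OF wf(1) this]
  hence labs: "lab X1 \<noteq> lab Y1" "lab X2 \<noteq> lab Y2" "lab X3 \<noteq> lab Y3"
    using S1[symmetric] S2[symmetric] S3[symmetric]
    by (auto simp: seg1_def seg2_def seg3_def split: if_splits)
  have same_set: "set w' = set w" using moves by auto
  have "idx w' z = idx w z" if "z \<in> arrows w'" for z
  proof -
    have "z \<in> arrows w" using that same_set by (simp add: arrows_def)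
    hence "idx w' z =
        idx w z + idx_swap_shift X1 Y1 z + idx_swap_shift X2 Y2 z + idx_swap_shift X3 Y3 z"
      using moves idx_swap3[of u X1 Y1 v X2 Y2 x X3 Y3 y z]
        idx_swap3[of u X1 Y1 v X3 Y3 x X2 Y2 y z] wf(1) labs
      by (auto simp: S1 S2 S3 ac_simps)
    thus ?thesis using r3_idx_shifts_cancel[OF ok abc S1 S2 S3, of z] by linarith
  qed
  moreover have "arrows w' = arrows w" using same_set by (simp add: arrows_def)
  ultimately show ?thesis using wf same_set by (intro aff_index_poly_eqI) simp_all
qed

lemma aff_index_poly_rstep:
  assumes "rstep w w'"
  shows "aff_index_poly w' = aff_index_poly w"
proof -
  have wf: "wf_gauss w" "wf_gauss w'" using assms by (auto simp: rstep_def)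
  from assms consider "rot_step w w'" | "relabel_step w w'" | "relabel_step w' w"
    | "r1_step w w'" | "r1_step w' w" | "r2_step w w'" | "r2_step w' w" | "r3_step w w'"
    unfolding rstep_def by blast
  thus ?thesis
    using aff_index_poly_rot[OF wf] aff_index_poly_relabel[of w w'] aff_index_poly_relabel[of w' w]
      aff_index_poly_r1[OF wf] aff_index_poly_r1[OF wf(2,1)] aff_index_poly_r2[OF wf]
      aff_index_poly_r2[OF wf(2,1)] aff_index_poly_r3[OF wf]
    by cases auto
qed

lemma aff_index_poly_rsteps:
  assumes "rstep\<^sup>*\<^sup>* w w'" "wf_gauss w"
  shows "wf_gauss w' \<and> aff_index_poly w' = aff_index_poly w"
  using assms
proof (induction rule: rtranclp_induct)
  case (step y z)
  thus ?case using aff_index_poly_rstep[OF step(2)] by (auto simp: rstep_def)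
qed simp

section \<open>Forbidden detours\<close>

lemma abs_sg [simp]: "\<bar>sg b\<bar> = 1"
  by (simp add: sg_def)

text \<open>\<open>t\<^sup>-\<^sup>i\<^sup>-\<^sup>1 - t\<^sup>-\<^sup>i = (t - 1) (-t\<^sup>-\<^sup>i\<^sup>-\<^sup>1)\<close> and \<open>t\<^sup>-\<^sup>i\<^sup>+\<^sup>1 - t\<^sup>-\<^sup>i = (t - 1) t\<^sup>-\<^sup>i\<close>.\<close>

lemma arrow_term_index_shift:
  fixes s i d :: int
  assumes "d = 1 \<or> d = -1"
  shows "\<exists>m. fls_const s * (fls_X_intpow (- (i + d)) - 1) =
             fls_const s * (fls_X_intpow (- i) - 1) +
             (fls_X - 1) * (fls_const (- d * s) * fls_X_intpow m)"
  using assms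
proof
  assume "d = 1"
  show ?thesis
    by (rule exI[of _ "- i - 1"], rule fls_eqI)
      (simp add: \<open>d = 1\<close> fls_X_times_conv_shift algebra_simps)
next
  assume "d = -1"
  show ?thesis
    by (rule exI[of _ "- i"], rule fls_eqI)
      (simp add: \<open>d = -1\<close> fls_X_times_conv_shift algebra_simps)
qed

lemma sum_eq_except_two:
  fixes f g :: "'a \<Rightarrow> 'b::ab_group_add"
  assumes "finite A" "x \<in> A" "y \<in> A" "x \<noteq> y"
    and "\<And>z. z \<in> A \<Longrightarrow> z \<noteq> x \<Longrightarrow> z \<noteq> y \<Longrightarrow> f z = g z"
  shows "sum f A = sum g A + (f x - g x) + (f y - g y)"
proof -
  have "sum f A - sum g A = (\<Sum>z\<in>A. f z - g z)" by (simp add: sum_subtractf)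
  also have "\<dots> = (\<Sum>z\<in>{x, y}. f z - g z)" using assms by (intro sum.mono_neutral_right) auto
  also have "\<dots> = (f x - g x) + (f y - g y)" using assms(4) by simp
  finally show ?thesis by (simp add: algebra_simps)
qed

lemma arrow_term_swap:
  assumes wf: "wf_gauss (p @ [X, Y] @ q)" and XY: "lab X \<noteq> lab Y"
    and z: "z \<in> arrows (p @ [X, Y] @ q)"
  shows "arrow_term (p @ [Y, X] @ q) z = fls_const (arrow_sign (p @ [X, Y] @ q) z) *
           (fls_X_intpow (- (idx (p @ [X, Y] @ q) z + idx_swap_shift X Y z)) - 1)"
proof -
  have "wf_gauss (p @ [Y, X] @ q)" using wf_gauss_mset_cong[of "p @ [X, Y] @ q"] wf by simp
  moreover have "set (p @ [Y, X] @ q) = set (p @ [X, Y] @ q)" by auto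
  ultimately show ?thesis
    using arrow_sign_subset[OF wf] idx_swap[OF wf XY z] z by (simp add: arrow_term_def arrows_def)
qed

lemma arrow_term_head_tail_swap:
  assumes wf: "wf_gauss (p @ [X, Y] @ q)" and XY: "lab X \<noteq> lab Y" "is_head X \<noteq> is_head Y"
    and z: "z \<in> {lab X, lab Y}"
  shows "\<exists>c m. \<bar>c\<bar> = 1 \<and> arrow_term (p @ [Y, X] @ q) z =
           arrow_term (p @ [X, Y] @ q) z + (fls_X - 1) * (fls_const c * fls_X_intpow m)"
proof -
  let ?w = "p @ [X, Y] @ q"
  let ?d = "idx_swap_shift X Y z" and ?s = "arrow_sign ?w z"
  have z_arrow: "z \<in> arrows ?w" using z by (auto simp: arrows_def)
  have d: "\<bar>?d\<bar> = 1" using z XY by (auto simp: idx_swap_shift_def endpt_sign_def abs_mult)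
  hence "?d = 1 \<or> ?d = -1" by linarith
  then obtain m where "fls_const ?s * (fls_X_intpow (- (idx ?w z + ?d)) - 1) =
      fls_const ?s * (fls_X_intpow (- idx ?w z) - 1) +
      (fls_X - 1) * (fls_const (- ?d * ?s) * fls_X_intpow m)"
    using arrow_term_index_shift by blast
  hence "arrow_term (p @ [Y, X] @ q) z =
      arrow_term ?w z + (fls_X - 1) * (fls_const (- ?d * ?s) * fls_X_intpow m)"
    using arrow_term_swap[OF wf XY(1) z_arrow] by (simp add: arrow_term_def)
  moreover have "\<bar>?s\<bar> = 1" using z arrow_sign_wf_gauss[OF wf] by auto
  hence "\<bar>- ?d * ?s\<bar> = 1" by (simp add: abs_mult d)
  ultimately show ?thesis by blast
qed

lemma aff_index_poly_fd_step:
  assumes fd: "fd_step u v" and wf: "wf_gauss u"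
  shows "\<exists>c1 c2 m1 m2. \<bar>c1\<bar> = 1 \<and> \<bar>c2\<bar> = 1 \<and>
           aff_index_poly v = aff_index_poly u +
             (fls_X - 1) * (fls_const c1 * fls_X_intpow m1 + fls_const c2 * fls_X_intpow m2)"
proof -
  obtain p q X Y where u: "u = p @ [X, Y] @ q" and v: "v = p @ [Y, X] @ q"
    and XY: "lab X \<noteq> lab Y" "is_head X \<noteq> is_head Y"
    using fd by (auto simp: fd_step_def)
  note change = arrow_term_head_tail_swap[OF wf[unfolded u] XY, folded u v]
  obtain c1 m1 where "\<bar>c1\<bar> = 1"
    and m1: "arrow_term v (lab X) =
      arrow_term u (lab X) + (fls_X - 1) * (fls_const c1 * fls_X_intpow m1)"
    using change by blast
  obtain c2 m2 where "\<bar>c2\<bar> = 1"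
    and m2: "arrow_term v (lab Y) =
      arrow_term u (lab Y) + (fls_X - 1) * (fls_const c2 * fls_X_intpow m2)"
    using change by blast
  have unchanged: "arrow_term v z = arrow_term u z" if "z \<in> arrows u" "z \<noteq> lab X" "z \<noteq> lab Y" for z
    using arrow_term_swap[OF wf[unfolded u] XY(1)] that
    by (simp add: u v arrow_term_def idx_swap_shift_def)
  have arrows: "arrows v = arrows u" "lab X \<in> arrows u" "lab Y \<in> arrows u"
    by (auto simp: u v arrows_def)
  have "aff_index_poly v = aff_index_poly u + (arrow_term v (lab X) - arrow_term u (lab X)) +
      (arrow_term v (lab Y) - arrow_term u (lab Y))"
    unfolding aff_index_poly_eq_sum arrows(1)
    by (intro sum_eq_except_two) (simp_all add: arrows XY unchanged)
  thus ?thesis using \<open>\<bar>c1\<bar> = 1\<close> \<open>\<bar>c2\<bar> = 1\<close> unfolding m1 m2 by (auto simp: distrib_left)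
qed

section \<open>The \<open>\<ell>\<^sub>1\<close> norm of Laurent series\<close>

definition fls_support :: "'a::zero fls \<Rightarrow> int set" where
  "fls_support f = {n. fls_nth f n \<noteq> 0}"

text \<open>Meaningful only for finitely supported series: a sum over an infinite support is 0.\<close>

definition fls_l1 :: "'a::ordered_ab_group_add_abs fls \<Rightarrow> 'a" where
  "fls_l1 f = (\<Sum>n\<in>fls_support f. \<bar>fls_nth f n\<bar>)"

lemma fls_l1_eq_sum:
  assumes "finite A" "fls_support f \<subseteq> A"
  shows "fls_l1 f = (\<Sum>n\<in>A. \<bar>fls_nth f n\<bar>)"
  unfolding fls_l1_def using assms by (intro sum.mono_neutral_left) (auto simp: fls_support_def)

lemma fls_support_add: "fls_support (f + g) \<subseteq> fls_support f \<union> fls_support g"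
  by (auto simp: fls_support_def)

lemma finite_fls_support_add:
  "finite (fls_support f) \<Longrightarrow> finite (fls_support g) \<Longrightarrow> finite (fls_support (f + g))"
  by (rule finite_subset[OF fls_support_add]) simp

lemma fls_l1_add_le:
  fixes f g :: "'a::ordered_ab_group_add_abs fls"
  assumes "finite (fls_support f)" "finite (fls_support g)"
  shows "fls_l1 (f + g) \<le> fls_l1 f + fls_l1 g"
proof -
  let ?A = "fls_support f \<union> fls_support g"
  have "fls_l1 (f + g) = (\<Sum>n\<in>?A. \<bar>fls_nth f n + fls_nth g n\<bar>)"
    using assms fls_support_add by (subst fls_l1_eq_sum) auto
  also have "\<dots> \<le> (\<Sum>n\<in>?A. \<bar>fls_nth f n\<bar> + \<bar>fls_nth g n\<bar>)"
    by (intro sum_mono abs_triangle_ineq)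
  also have "\<dots> = fls_l1 f + fls_l1 g"
    using assms by (simp add: sum.distrib fls_l1_eq_sum[of ?A f] fls_l1_eq_sum[of ?A g])
  finally show ?thesis .
qed

lemma fls_support_uminus [simp]: "fls_support (- f) = fls_support f"
  by (simp add: fls_support_def)

lemma fls_l1_uminus [simp]: "fls_l1 (- f) = fls_l1 f"
  by (simp add: fls_l1_def)

lemma fls_support_monomial: "fls_support (fls_const (c::'a::semiring_1) * fls_X_intpow m) \<subseteq> {m}"
  by (auto simp: fls_support_def)

lemma fls_l1_monomial: "fls_l1 (fls_const c * fls_X_intpow m) = \<bar>c :: 'a::linordered_idom\<bar>"
  using fls_l1_eq_sum[OF _ fls_support_monomial] by simp

lemma fls_l1_two_monomials:
  fixes c1 c2 :: "'a::linordered_idom" and m1 m2 :: int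
  defines "B \<equiv> fls_const c1 * fls_X_intpow m1 + fls_const c2 * fls_X_intpow m2"
  shows "finite (fls_support B)" "fls_l1 B \<le> \<bar>c1\<bar> + \<bar>c2\<bar>"
proof -
  have fin: "finite (fls_support (fls_const c * fls_X_intpow m :: 'a fls))" for c m
    by (rule finite_subset[OF fls_support_monomial]) simp
  show "finite (fls_support B)" unfolding B_def by (intro finite_fls_support_add fin)
  show "fls_l1 B \<le> \<bar>c1\<bar> + \<bar>c2\<bar>"
    using fls_l1_add_le[OF fin fin] unfolding B_def fls_l1_monomial .
qed

lemma fls_nth_sum_monomials:
  fixes a :: "int \<Rightarrow> 'a::semiring_1"
  assumes "finite {n. a n \<noteq> 0}"
  shows "fls_nth (\<Sum>n\<in>{n. a n \<noteq> 0}. fls_const (a n) * fls_X_intpow n) k = a k"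
  using assms by (simp add: fls_nth_sum if_distrib[of "(*) _"] sum.delta cong: if_cong)

lemma fls_X_minus_1_nonzero: "fls_X - 1 \<noteq> (0 :: 'a::ring_1 fls)"
proof
  assume "fls_X - 1 = (0 :: 'a fls)"
  hence "fls_nth (fls_X - 1 :: 'a fls) 1 = 0" by simp
  thus False by simp
qed

lemma unknots_with_fls_l1_bound:
  assumes "unknots_with w n" "wf_gauss w" "aff_index_poly w = (fls_X - 1) * A"
    and "finite (fls_support A)"
  shows "fls_l1 A \<le> 2 * int n"
  using assms
proof (induction w n arbitrary: A rule: unknots_with.induct)
  case (zero w)
  hence "(fls_X - 1) * A = 0"
    using aff_index_poly_rsteps[OF zero.hyps zero.prems(1)] by (simp add: aff_index_poly_Nil)
  hence "A = 0" using fls_X_minus_1_nonzero[where 'a = int] by simp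
  thus ?case by (simp add: fls_l1_def fls_support_def)
next
  case (step w u v n)
  have "wf_gauss u" and aff_u: "aff_index_poly u = (fls_X - 1) * A"
    using aff_index_poly_rsteps[OF step.hyps(1) step.prems(1)] step.prems(2) by auto
  then obtain c1 c2 m1 m2 where c: "\<bar>c1\<bar> = 1" "\<bar>c2\<bar> = 1" and aff_v: "aff_index_poly v =
      aff_index_poly u +
        (fls_X - 1) * (fls_const c1 * fls_X_intpow m1 + fls_const c2 * fls_X_intpow m2)"
    using aff_index_poly_fd_step[OF step.hyps(2)] by blast
  define B where "B = fls_const c1 * fls_X_intpow m1 + fls_const c2 * fls_X_intpow m2"
  have fin_B: "finite (fls_support B)" and "fls_l1 B \<le> 2"
    using fls_l1_two_monomials[of c1 m1 c2 m2] c by (simp_all add: B_def)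
  have fin_AB: "finite (fls_support (A + B))"
    using step.prems(3) fin_B by (rule finite_fls_support_add)
  have "aff_index_poly v = (fls_X - 1) * (A + B)"
    using aff_v aff_u by (simp add: B_def algebra_simps)
  hence "fls_l1 (A + B) \<le> 2 * int n"
    using step.IH fd_step_wf_gauss[OF step.hyps(2) \<open>wf_gauss u\<close>] fin_AB by blast
  moreover have "fls_l1 A \<le> fls_l1 (A + B) + fls_l1 B"
    using fls_l1_add_le[OF fin_AB, of "- B"] fin_B by simp
  ultimately show ?case using \<open>fls_l1 B \<le> 2\<close> by simp
qed

lemma Fd_cases:
  obtains "Fd w = \<infinity>" | n where "Fd w = enat n" "unknots_with w n"
proof (cases "{enat n | n. unknots_with w n} = {}")
  case True
  thus ?thesis using that(1) by (simp add: Fd_def Inf_enat_def)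
next
  case False
  hence "Fd w \<in> {enat n | n. unknots_with w n}"
    unfolding Fd_def Inf_enat_def by (auto intro: LeastI)
  thus ?thesis using that(2) by blast
qed

theorem theorem1p2:
  fixes D :: gauss and a :: "int \<Rightarrow> int"
  assumes "wf_gauss D"
    and "finite {n. a n \<noteq> 0}"
    and "aff_index_poly D =
           (fls_X - 1) * (\<Sum>n \<in> {n. a n \<noteq> 0}. fls_const (a n) * fls_X_intpow n)"
  shows "ereal (real_of_int (\<Sum>n \<in> {n. a n \<noteq> 0}. \<bar>a n\<bar>) / 2) \<le> ereal_of_enat (Fd D)"
proof -
  define A where "A = (\<Sum>n \<in> {n. a n \<noteq> 0}. fls_const (a n) * fls_X_intpow n)"
  have "fls_support A = {n. a n \<noteq> 0}" "fls_l1 A = (\<Sum>n \<in> {n. a n \<noteq> 0}. \<bar>a n\<bar>)"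
    using fls_nth_sum_monomials[OF assms(2)] by (simp_all add: A_def fls_support_def fls_l1_def)
  hence bound: "(\<Sum>n \<in> {n. a n \<noteq> 0}. \<bar>a n\<bar>) \<le> 2 * int n" if "unknots_with D n" for n
    using unknots_with_fls_l1_bound[OF that assms(1) assms(3)[folded A_def]] assms(2) by simp
  show ?thesis
  proof (cases rule: Fd_cases[of D])
    case (2 n)
    have "real_of_int (\<Sum>n \<in> {n. a n \<noteq> 0}. \<bar>a n\<bar>) / 2 \<le> real n"
      using bound[OF 2(2)] by linarith
    thus ?thesis using 2(1) by simp
  qed simp
qed

end
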